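(* Let $n\geq 7$ and $p\geq 2$. Then $\rho(\mathbf{S}_{p}(U_{5}))<\rho(\mathbf{S}_{p}(U_{4}))$.
   Context: All graphs are simple and connected; $d_i$ is the degree of $v_i$. The $p$-Sombor matrix $\mathbf{S}_{p}(G)$ has $(i,j)$-entry $(d_i^{p}+d_j^{p})^{1/p}$ if $v_iv_j\in E(G)$ and $0$ otherwise; $\rho(\mathbf{S}_{p}(G))$ is its largest eigenvalue. $U_4$ is the unicyclic graph of order $n$ consisting of a triangle $xyz$, with $n-5$ pendant vertices attached to $x$ and $2$ pendant vertices attached to $y$. $U_5$ is the unicyclic graph of order $n$ consisting of a triangle $xyz$, a vertex $w$ adjacent to $x$, and $n-4$ pendant vertices attached to $w$. *)

theory Defs
  imports Complex_Main "Jordan_Normal_Form.Char_Poly"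
begin

text \<open>Simple graphs on the vertex set {0..<n}, given by a symmetric irreflexive
  adjacency predicate.\<close>

definition deg :: "nat \<Rightarrow> (nat \<Rightarrow> nat \<Rightarrow> bool) \<Rightarrow> nat \<Rightarrow> nat" where
  "deg n E i = card {j. j < n \<and> E i j}"

definition sombor_mat :: "real \<Rightarrow> nat \<Rightarrow> (nat \<Rightarrow> nat \<Rightarrow> bool) \<Rightarrow> real mat" where
  "sombor_mat p n E = mat n n (\<lambda>(i,j). if E i j
      then (real (deg n E i) powr p + real (deg n E j) powr p) powr (1 / p) else 0)"

definition rho :: "real mat \<Rightarrow> real" where
  "rho A = Max {k. eigenvalue A k}"

definition undirected :: "(nat \<times> nat) set \<Rightarrow> nat \<Rightarrow> nat \<Rightarrow> bool" where
  "undirected S i j \<longleftrightarrow> (i, j) \<in> S \<or> (j, i) \<in> S"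

text \<open>U_4: triangle x=0, y=1, z=2; pendant vertices 3,4 attached to y;
  pendant vertices 5..n-1 (n-5 of them) attached to x.\<close>
definition U4 :: "nat \<Rightarrow> nat \<Rightarrow> nat \<Rightarrow> bool" where
  "U4 n = undirected ({(0,1),(1,2),(0,2),(1,3),(1,4)} \<union> {(0,k) | k. 5 \<le> k \<and> k < n})"

text \<open>U_5: triangle x=0, y=1, z=2; vertex w=3 adjacent to x;
  pendant vertices 4..n-1 (n-4 of them) attached to w.\<close>
definition U5 :: "nat \<Rightarrow> nat \<Rightarrow> nat \<Rightarrow> bool" where
  "U5 n = undirected ({(0,1),(1,2),(0,2),(0,3)} \<union> {(3,k) | k. 4 \<le> k \<and> k < n})"

end

theory Submission
  imports Defs
begin

text \<open>Both spectral radii are compared with one number t. Restricted to vectors that are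
  constant on the pendant vertices at x and at y, the eigen-equations of S_p(U_4) reduce, after
  eliminating the entries at y and z, to a scalar secular equation in t; the intermediate value
  theorem gives a root t \<ge> 8, whose positive solution vector is an eigenvector, so
  t \<le> rho(S_p(U_4)). For U_5 we build a positive vector x with S_p(U_5) x < t x entrywise;
  comparing an eigenvector with x at the index of maximal ratio shows that every real eigenvalue
  of S_p(U_5) is below t. Such an x exists as soon as one polynomial inequality in t holds, and
  this inequality follows from the secular equation and the crude bounds on the edge weights
  that p \<ge> 2 provides (e.g. (2^p + 2^p)^(1/p) < 3).\<close>

definition sombor_weight :: "real \<Rightarrow> real \<Rightarrow> real \<Rightarrow> real" where
  "sombor_weight p x y = (x powr p + y powr p) powr (1 / p)"

lemma sombor_weight_commute: "sombor_weight p x y = sombor_weight p y x"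
  unfolding sombor_weight_def by (simp add: add.commute)

lemma sombor_weight_nonneg: "0 \<le> sombor_weight p x y"
  unfolding sombor_weight_def by simp

lemma sombor_weight_ge:
  assumes "0 \<le> x" "0 \<le> y" "0 < p"
  shows "x \<le> sombor_weight p x y"
proof -
  have "x = (x powr p) powr (1 / p)"
    using assms by (simp add: powr_powr)
  also have "\<dots> \<le> sombor_weight p x y"
    unfolding sombor_weight_def by (rule powr_mono2) (use assms in auto)
  finally show ?thesis .
qed

lemma sombor_weight_mono:
  assumes "0 \<le> x" "0 \<le> y" "x \<le> x'" "y \<le> y'" "0 < p"
  shows "sombor_weight p x y \<le> sombor_weight p x' y'"
  unfolding sombor_weight_def
  using assms by (intro powr_mono2 add_mono) auto

lemma sombor_weight_sq_le:
  assumes "0 \<le> x" "0 \<le> y" "2 \<le> p"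
  shows "(sombor_weight p x y)\<^sup>2 \<le> x\<^sup>2 + y\<^sup>2"
proof -
  define s where "s = sqrt (x\<^sup>2 + y\<^sup>2)"
  have s: "0 \<le> s" "s\<^sup>2 = x\<^sup>2 + y\<^sup>2"
    unfolding s_def by simp_all
  have "u powr p \<le> u\<^sup>2 * s powr (p - 2)" if "0 \<le> u" "u\<^sup>2 \<le> s\<^sup>2" for u
  proof -
    have "u \<le> s"
      using that s(1) by (simp add: power2_le_iff_abs_le)
    have "u powr p = u powr 2 * u powr (p - 2)"
      by (simp flip: powr_add)
    also have "\<dots> \<le> u\<^sup>2 * s powr (p - 2)"
      using that \<open>u \<le> s\<close> assms(3) by (simp add: mult_left_mono powr_mono2)
    finally show ?thesis .
  qed
  then have "x powr p + y powr p \<le> (x\<^sup>2 + y\<^sup>2) * s powr (p - 2)"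
    using assms(1,2) s(2) by (simp add: distrib_right add_mono)
  also have "\<dots> = s powr 2 * s powr (p - 2)"
    using s by simp
  also have "\<dots> = s powr p"
    by (simp flip: powr_add)
  finally have "sombor_weight p x y \<le> (s powr p) powr (1 / p)"
    unfolding sombor_weight_def using assms by (intro powr_mono2) auto
  also have "\<dots> = s"
    using s(1) assms(3) by (simp add: powr_powr)
  finally show ?thesis
    using s sombor_weight_nonneg by (metis power_mono)
qed

lemma mult_mat_vec_nth_sum:
  fixes M :: "'a :: comm_semiring_0 mat"
  assumes "M \<in> carrier_mat n n" "v \<in> carrier_vec n" "i < n"
  shows "(M *\<^sub>v v) $ i = (\<Sum>j<n. M $$ (i, j) * v $ j)"
  using assms by (auto simp: scalar_prod_def lessThan_atLeast0 intro!: sum.cong)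

lemma eigenvalue_vecI:
  fixes M :: "'a :: field mat"
  assumes "M \<in> carrier_mat n n" "i < n" "f i \<noteq> 0"
    and "\<And>i. i < n \<Longrightarrow> (M *\<^sub>v vec n f) $ i = t * f i"
  shows "eigenvalue M t"
  unfolding eigenvalue_def eigenvector_def
proof (intro exI conjI)
  show "vec n f \<in> carrier_vec (dim_row M)"
    using assms(1) by simp
  show "vec n f \<noteq> 0\<^sub>v (dim_row M)"
    using assms(1-3) by (metis carrier_matD(1) index_vec index_zero_vec(1))
  show "M *\<^sub>v vec n f = t \<cdot>\<^sub>v vec n f"
    using assms(1,4) by (intro eq_vecI) auto
qed

text \<open>Collatz--Wielandt: compare an eigenvector v with x at an index where |v i| / x i is
  maximal.\<close>
lemma abs_eigenvalue_lt_subinvariant: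
  fixes M :: "real mat"
  assumes M: "M \<in> carrier_mat n n"
    and nonneg: "\<And>i j. i < n \<Longrightarrow> j < n \<Longrightarrow> 0 \<le> M $$ (i, j)"
    and pos: "\<And>i. i < n \<Longrightarrow> 0 < x i"
    and sub: "\<And>i. i < n \<Longrightarrow> (M *\<^sub>v vec n x) $ i < t * x i"
    and "eigenvalue M k"
  shows "\<bar>k\<bar> < t"
proof -
  obtain v where v: "v \<in> carrier_vec n" "v \<noteq> 0\<^sub>v n" "M *\<^sub>v v = k \<cdot>\<^sub>v v"
    using \<open>eigenvalue M k\<close> M unfolding eigenvalue_def eigenvector_def by auto
  obtain i0 where i0: "i0 < n" "v $ i0 \<noteq> 0"
    using v(1,2) by (metis eq_vecI carrier_vecD index_zero_vec(1,2))
  define r where "r = Max ((\<lambda>i. \<bar>v $ i\<bar> / x i) ` {..<n})"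
  have r_ge: "\<bar>v $ j\<bar> \<le> r * x j" if "j < n" for j
  proof -
    have "\<bar>v $ j\<bar> / x j \<le> r"
      unfolding r_def using that by (intro Max_ge) auto
    then show ?thesis
      using pos[OF that] by (simp add: divide_le_eq)
  qed
  have "r \<in> (\<lambda>i. \<bar>v $ i\<bar> / x i) ` {..<n}"
    unfolding r_def using i0(1) by (intro Max_in) auto
  then obtain i where i: "i < n" "r = \<bar>v $ i\<bar> / x i"
    by auto
  have "0 < r"
    using r_ge[OF i0(1)] i0 pos[OF i0(1)] by (smt (verit) mult_nonpos_nonneg)
  have "\<bar>k\<bar> * \<bar>v $ i\<bar> = \<bar>\<Sum>j<n. M $$ (i, j) * v $ j\<bar>"
    using v i mult_mat_vec_nth_sum[OF M v(1) i(1)] by (simp flip: abs_mult)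
  also have "\<dots> \<le> (\<Sum>j<n. M $$ (i, j) * \<bar>v $ j\<bar>)"
    using nonneg i by (intro order_trans[OF sum_abs]) (simp add: abs_mult)
  also have "\<dots> \<le> (\<Sum>j<n. M $$ (i, j) * (r * x j))"
    using nonneg i(1) r_ge by (intro sum_mono mult_left_mono) auto
  also have "\<dots> = r * (M *\<^sub>v vec n x) $ i"
    using mult_mat_vec_nth_sum[OF M _ i(1), of "vec n x"] by (simp add: sum_distrib_left ac_simps)
  also have "\<dots> < r * (t * x i)"
    using sub[OF i(1)] \<open>0 < r\<close> by simp
  also have "\<dots> = t * \<bar>v $ i\<bar>"
    using i pos[OF i(1)] by simp
  finally show ?thesis
    using i \<open>0 < r\<close> pos[OF i(1)] by (simp add: mult_less_cancel_right)
qed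

lemma finite_eigenvalues:
  fixes M :: "'a :: field mat"
  assumes "M \<in> carrier_mat n n"
  shows "finite {k. eigenvalue M k}"
proof -
  have "char_poly M \<noteq> 0"
    using degree_monic_char_poly[OF assms] by auto
  then show ?thesis
    using poly_roots_finite eigenvalue_root_char_poly[OF assms] by simp
qed

lemma eigenvalue_le_rho:
  assumes "M \<in> carrier_mat n n" "eigenvalue M k"
  shows "k \<le> rho M"
  unfolding rho_def using assms finite_eigenvalues by (intro Max_ge) auto

lemma rho_lt:
  assumes "M \<in> carrier_mat n n" "eigenvalue M k" "\<And>k. eigenvalue M k \<Longrightarrow> k < t"
  shows "rho M < t"
  unfolding rho_def using assms finite_eigenvalues
  by (metis (mono_tags) Max_in empty_iff mem_Collect_eq)

lemma sombor_mat_carrier: "sombor_mat p n E \<in> carrier_mat n n"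
  unfolding sombor_mat_def by simp

lemma sombor_mat_nonneg: "i < n \<Longrightarrow> j < n \<Longrightarrow> 0 \<le> sombor_mat p n E $$ (i, j)"
  unfolding sombor_mat_def by simp

lemma sombor_mat_mult_vec:
  assumes "i < n"
  shows "(sombor_mat p n E *\<^sub>v vec n f) $ i =
    (\<Sum>j | j < n \<and> E i j. sombor_weight p (deg n E i) (deg n E j) * f j)"
proof -
  have "(sombor_mat p n E *\<^sub>v vec n f) $ i =
      (\<Sum>j<n. if E i j then sombor_weight p (deg n E i) (deg n E j) * f j else 0)"
    using assms mult_mat_vec_nth_sum[OF sombor_mat_carrier _ assms, of "vec n f"]
    by (auto simp: sombor_mat_def sombor_weight_def intro!: sum.cong)
  also have "\<dots> = (\<Sum>j | j < n \<and> E i j. sombor_weight p (deg n E i) (deg n E j) * f j)"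
    by (subst sum.inter_filter[symmetric]) simp_all
  finally show ?thesis .
qed

lemma U4_neighbours:
  assumes "7 \<le> n"
  shows "{j. j < n \<and> U4 n 0 j} = {1, 2} \<union> {5..<n}"
    and "{j. j < n \<and> U4 n 1 j} = {0, 2, 3, 4}"
    and "{j. j < n \<and> U4 n 2 j} = {0, 1}"
    and "{j. j < n \<and> U4 n 3 j} = {1}"
    and "{j. j < n \<and> U4 n 4 j} = {1}"
    and "5 \<le> k \<Longrightarrow> k < n \<Longrightarrow> {j. j < n \<and> U4 n k j} = {0}"
  using assms by (auto simp: U4_def undirected_def)

lemma U5_neighbours:
  assumes "7 \<le> n"
  shows "{j. j < n \<and> U5 n 0 j} = {1, 2, 3}"
    and "{j. j < n \<and> U5 n 1 j} = {0, 2}"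
    and "{j. j < n \<and> U5 n 2 j} = {0, 1}"
    and "{j. j < n \<and> U5 n 3 j} = {0} \<union> {4..<n}"
    and "4 \<le> k \<Longrightarrow> k < n \<Longrightarrow> {j. j < n \<and> U5 n k j} = {3}"
  using assms by (auto simp: U5_def undirected_def)

lemma U4_deg:
  assumes "7 \<le> n"
  shows "deg n (U4 n) 0 = n - 3" and "deg n (U4 n) 1 = 4" and "deg n (U4 n) 2 = 2"
    and "deg n (U4 n) 3 = 1" and "deg n (U4 n) 4 = 1"
    and "5 \<le> k \<Longrightarrow> k < n \<Longrightarrow> deg n (U4 n) k = 1"
  using assms by (simp_all add: deg_def U4_neighbours card_Un_disjoint del: One_nat_def)

lemma U5_deg:
  assumes "7 \<le> n"
  shows "deg n (U5 n) 0 = 3" and "deg n (U5 n) 1 = 2" and "deg n (U5 n) 2 = 2"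
    and "deg n (U5 n) 3 = n - 3"
    and "4 \<le> k \<Longrightarrow> k < n \<Longrightarrow> deg n (U5 n) k = 1"
  using assms by (simp_all add: deg_def U5_neighbours card_Un_disjoint del: One_nat_def)

lemma U4_mult_vec:
  fixes p :: real
  assumes "7 \<le> n"
  defines "S \<equiv> sombor_mat p n (U4 n)" and "D \<equiv> real (n - 3)"
  shows "(S *\<^sub>v vec n f) $ 0 =
      sombor_weight p D 4 * f 1 + sombor_weight p D 2 * f 2 + sombor_weight p D 1 * (\<Sum>k=5..<n. f k)"
    and "(S *\<^sub>v vec n f) $ 1 =
      sombor_weight p D 4 * f 0 + sombor_weight p 4 2 * f 2 + sombor_weight p 4 1 * (f 3 + f 4)"
    and "(S *\<^sub>v vec n f) $ 2 = sombor_weight p D 2 * f 0 + sombor_weight p 4 2 * f 1"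
    and "(S *\<^sub>v vec n f) $ 3 = sombor_weight p 4 1 * f 1"
    and "(S *\<^sub>v vec n f) $ 4 = sombor_weight p 4 1 * f 1"
    and "5 \<le> k \<Longrightarrow> k < n \<Longrightarrow> (S *\<^sub>v vec n f) $ k = sombor_weight p D 1 * f 0"
proof -
  note nb = U4_neighbours[OF assms(1)]
  have n: "0 < n" "1 < n" "2 < n" "3 < n" "4 < n"
    using assms(1) by simp_all
  have deg: "real (deg n (U4 n) 0) = D" "real (deg n (U4 n) 1) = 4" "real (deg n (U4 n) 2) = 2"
    "real (deg n (U4 n) 3) = 1" "real (deg n (U4 n) 4) = 1"
    "\<And>k. 5 \<le> k \<Longrightarrow> k < n \<Longrightarrow> real (deg n (U4 n) k) = 1"
    using U4_deg[OF assms(1)] unfolding D_def by simp_all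
  have row: "(S *\<^sub>v vec n f) $ i = (\<Sum>j | j < n \<and> U4 n i j.
      sombor_weight p (deg n (U4 n) i) (deg n (U4 n) j) * f j)" if "i < n" for i
    unfolding S_def using that by (rule sombor_mat_mult_vec)
  have "(\<Sum>k=5..<n. sombor_weight p D (deg n (U4 n) k) * f k) = sombor_weight p D 1 * (\<Sum>k=5..<n. f k)"
    by (simp add: sum_distrib_left deg(6))
  then show "(S *\<^sub>v vec n f) $ 0 =
      sombor_weight p D 4 * f 1 + sombor_weight p D 2 * f 2 + sombor_weight p D 1 * (\<Sum>k=5..<n. f k)"
    unfolding row[OF n(1)] nb(1)
    by (simp add: sum.union_disjoint deg del: One_nat_def)
  show "(S *\<^sub>v vec n f) $ 1 =
      sombor_weight p D 4 * f 0 + sombor_weight p 4 2 * f 2 + sombor_weight p 4 1 * (f 3 + f 4)"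
    unfolding row[OF n(2)] nb(2)
    by (simp add: deg sombor_weight_commute[of p 4 D] distrib_left del: One_nat_def)
  show "(S *\<^sub>v vec n f) $ 2 = sombor_weight p D 2 * f 0 + sombor_weight p 4 2 * f 1"
    unfolding row[OF n(3)] nb(3)
    by (simp add: deg sombor_weight_commute[of p 2] del: One_nat_def)
  show "(S *\<^sub>v vec n f) $ 3 = sombor_weight p 4 1 * f 1"
    unfolding row[OF n(4)] nb(4)
    by (simp add: deg sombor_weight_commute[of p 1] del: One_nat_def)
  show "(S *\<^sub>v vec n f) $ 4 = sombor_weight p 4 1 * f 1"
    unfolding row[OF n(5)] nb(5)
    by (simp add: deg sombor_weight_commute[of p 1] del: One_nat_def)
  show "(S *\<^sub>v vec n f) $ k = sombor_weight p D 1 * f 0" if "5 \<le> k" "k < n"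
    using that unfolding row[OF that(2)] nb(6)[OF that]
    by (simp add: deg sombor_weight_commute[of p 1])
qed

lemma U5_mult_vec:
  fixes p :: real
  assumes "7 \<le> n"
  defines "S \<equiv> sombor_mat p n (U5 n)" and "D \<equiv> real (n - 3)"
  shows "(S *\<^sub>v vec n f) $ 0 = sombor_weight p 3 2 * (f 1 + f 2) + sombor_weight p 3 D * f 3"
    and "(S *\<^sub>v vec n f) $ 1 = sombor_weight p 3 2 * f 0 + sombor_weight p 2 2 * f 2"
    and "(S *\<^sub>v vec n f) $ 2 = sombor_weight p 3 2 * f 0 + sombor_weight p 2 2 * f 1"
    and "(S *\<^sub>v vec n f) $ 3 = sombor_weight p 3 D * f 0 + sombor_weight p D 1 * (\<Sum>k=4..<n. f k)"
    and "4 \<le> k \<Longrightarrow> k < n \<Longrightarrow> (S *\<^sub>v vec n f) $ k = sombor_weight p D 1 * f 3"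
proof -
  note nb = U5_neighbours[OF assms(1)]
  have n: "0 < n" "1 < n" "2 < n" "3 < n"
    using assms(1) by simp_all
  have deg: "real (deg n (U5 n) 0) = 3" "real (deg n (U5 n) 1) = 2" "real (deg n (U5 n) 2) = 2"
    "real (deg n (U5 n) 3) = D" "\<And>k. 4 \<le> k \<Longrightarrow> k < n \<Longrightarrow> real (deg n (U5 n) k) = 1"
    using U5_deg[OF assms(1)] unfolding D_def by simp_all
  have row: "(S *\<^sub>v vec n f) $ i = (\<Sum>j | j < n \<and> U5 n i j.
      sombor_weight p (deg n (U5 n) i) (deg n (U5 n) j) * f j)" if "i < n" for i
    unfolding S_def using that by (rule sombor_mat_mult_vec)
  show "(S *\<^sub>v vec n f) $ 0 = sombor_weight p 3 2 * (f 1 + f 2) + sombor_weight p 3 D * f 3"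
    unfolding row[OF n(1)] nb(1)
    by (simp add: deg distrib_left del: One_nat_def)
  show "(S *\<^sub>v vec n f) $ 1 = sombor_weight p 3 2 * f 0 + sombor_weight p 2 2 * f 2"
    unfolding row[OF n(2)] nb(2)
    by (simp add: deg sombor_weight_commute[of p 2 3] del: One_nat_def)
  show "(S *\<^sub>v vec n f) $ 2 = sombor_weight p 3 2 * f 0 + sombor_weight p 2 2 * f 1"
    unfolding row[OF n(3)] nb(3)
    by (simp add: deg sombor_weight_commute[of p 2 3] del: One_nat_def)
  have "(\<Sum>k=4..<n. sombor_weight p D (deg n (U5 n) k) * f k) = sombor_weight p D 1 * (\<Sum>k=4..<n. f k)"
    by (simp add: sum_distrib_left deg(5))
  then show "(S *\<^sub>v vec n f) $ 3 = sombor_weight p 3 D * f 0 + sombor_weight p D 1 * (\<Sum>k=4..<n. f k)"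
    unfolding row[OF n(4)] nb(4)
    by (simp add: sum.union_disjoint deg sombor_weight_commute[of p D 3] del: One_nat_def)
  show "(S *\<^sub>v vec n f) $ k = sombor_weight p D 1 * f 3" if "4 \<le> k" "k < n"
    using that unfolding row[OF that(2)] nb(5)[OF that]
    by (simp add: deg sombor_weight_commute[of p 1])
qed

text \<open>The four inequalities are the rows, at x, y, w and a pendant vertex, of the entrywise
  inequality S_p(U_5) v < t v for the vector v with entries a at x, b at y and z, 1 at w and e at
  the m pendant vertices. The hypothesis is exactly what makes the resulting bounds on a, b and e
  compatible.\<close>
lemma U5_quotient_subinvariant:
  fixes W P R E m t :: real
  assumes "0 < W" "0 < P" "0 < E" "0 < m" "0 \<le> R" "R < t"
    and "0 < t * (t - R) - 2 * P\<^sup>2"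
    and sep: "W\<^sup>2 * (t * (t - R)) < (t * (t - R) - 2 * P\<^sup>2) * (t\<^sup>2 - m * E\<^sup>2)"
  obtains a b e where "0 < a" "0 < b" "0 < e"
    and "2 * P * b + W < t * a" "P * a + R * b < t * b" "W * a + m * E * e < t" "E < t * e"
proof -
  define Q where "Q = t * (t - R) - 2 * P\<^sup>2"
  have "0 < t" "0 < t - R" "0 < Q"
    using assms unfolding Q_def by simp_all
  have "W * (t - R) / Q < (t\<^sup>2 - m * E\<^sup>2) / (W * t)"
    using sep \<open>0 < t\<close> \<open>0 < Q\<close> \<open>0 < W\<close>
    by (simp add: Q_def divide_less_eq less_divide_eq power2_eq_square mult_ac)
  then obtain a where a: "W * (t - R) / Q < a" "a < (t\<^sup>2 - m * E\<^sup>2) / (W * t)"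
    using dense by blast
  have "0 < a"
    using a(1) \<open>0 < W\<close> \<open>0 < t - R\<close> \<open>0 < Q\<close> by (smt (verit) divide_pos_pos mult_pos_pos)
  have "W * (t - R) < a * Q"
    using a(1) \<open>0 < Q\<close> by (simp add: divide_less_eq mult.commute)
  then have "P * a * (2 * P) < (t * a - W) * (t - R)"
    by (simp add: Q_def algebra_simps power2_eq_square)
  then have "P * a / (t - R) < (t * a - W) / (2 * P)"
    using \<open>0 < P\<close> \<open>0 < t - R\<close> by (simp add: field_simps)
  then obtain b where b: "P * a / (t - R) < b" "b < (t * a - W) / (2 * P)"
    using dense by blast
  have "a * (W * t) < t\<^sup>2 - m * E\<^sup>2"
    using a(2) \<open>0 < t\<close> \<open>0 < W\<close> by (simp add: less_divide_eq)
  then have "E * (m * E) < (t - W * a) * t"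
    by (simp add: algebra_simps power2_eq_square)
  then have "E / t < (t - W * a) / (m * E)"
    using \<open>0 < t\<close> \<open>0 < m\<close> \<open>0 < E\<close> by (simp add: field_simps)
  then obtain e where e: "E / t < e" "e < (t - W * a) / (m * E)"
    using dense by blast
  show ?thesis
  proof
    show "0 < a" by fact
    show "0 < b"
      using b(1) \<open>0 < P\<close> \<open>0 < a\<close> \<open>0 < t - R\<close> by (smt (verit) divide_pos_pos mult_pos_pos)
    show "0 < e"
      using e(1) \<open>0 < E\<close> \<open>0 < t\<close> by (smt (verit) divide_pos_pos)
    show "2 * P * b + W < t * a"
      using b(2) \<open>0 < P\<close> by (simp add: less_divide_eq mult_ac)
    show "P * a + R * b < t * b"
      using b(1) \<open>0 < t - R\<close> by (simp add: divide_less_eq algebra_simps)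
    show "W * a + m * E * e < t"
      using e(2) \<open>0 < m\<close> \<open>0 < E\<close> by (simp add: less_divide_eq mult_ac)
    show "E < t * e"
      using e(1) \<open>0 < t\<close> by (simp add: divide_less_eq mult_ac)
  qed
qed

lemma secular_fraction_ge:
  fixes A B C K t :: real
  assumes "0 \<le> A" "0 \<le> B * C" "0 \<le> K" "K < t\<^sup>2" "0 < t"
  shows "A\<^sup>2 \<le> (A * t + B * C)\<^sup>2 / (t\<^sup>2 - K)"
proof -
  have "A\<^sup>2 = (A * t)\<^sup>2 / t\<^sup>2"
    using assms by (simp add: power_mult_distrib)
  also have "\<dots> \<le> (A * t + B * C)\<^sup>2 / t\<^sup>2"
    using assms by (intro divide_right_mono power_mono) auto
  also have "\<dots> \<le> (A * t + B * C)\<^sup>2 / (t\<^sup>2 - K)"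
    using assms by (intro divide_left_mono) auto
  finally show ?thesis .
qed

lemma secular_fraction_le:
  fixes A B C K t :: real
  assumes "0 \<le> A" "0 \<le> B * C" "1 \<le> t" "2 * K \<le> t\<^sup>2" "0 < t\<^sup>2 - K"
  shows "(A * t + B * C)\<^sup>2 / (t\<^sup>2 - K) \<le> 2 * (A + B * C)\<^sup>2"
proof -
  have "A * t + B * C \<le> (A + B * C) * t"
    using assms by (simp add: distrib_right mult_le_cancel_left1)
  then have "(A * t + B * C)\<^sup>2 \<le> (A + B * C)\<^sup>2 * t\<^sup>2"
    using assms by (metis power_mono power_mult_distrib add_nonneg_nonneg mult_nonneg_nonneg
        order_trans zero_le_one)
  also have "\<dots> \<le> (A + B * C)\<^sup>2 * (2 * (t\<^sup>2 - K))"
    using assms by (intro mult_left_mono) auto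
  also have "\<dots> = 2 * (A + B * C)\<^sup>2 * (t\<^sup>2 - K)"
    by simp
  finally show ?thesis
    using assms by (simp add: divide_le_eq mult_ac)
qed

lemma secular_root_exists:
  fixes A B C E K D :: real
  assumes "4 \<le> D" "D \<le> A" "D \<le> B" "D \<le> E" "0 \<le> C" "0 \<le> K" "K < 64"
  obtains t where "8 \<le> t" "t\<^sup>2 - (D - 2) * E\<^sup>2 = B\<^sup>2 + (A * t + B * C)\<^sup>2 / (t\<^sup>2 - K)"
proof -
  define G where "G t = t\<^sup>2 - (D - 2) * E\<^sup>2 - B\<^sup>2 - (A * t + B * C)\<^sup>2 / (t\<^sup>2 - K)" for t
  define l0 where "l0 = D * sqrt D"
  have "2 \<le> sqrt D"
    using assms(1) by (simp add: real_le_rsqrt)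
  then have "8 \<le> l0"
    unfolding l0_def using assms(1) mult_mono[of 4 D 2 "sqrt D"] by simp
  have l0_sq: "l0\<^sup>2 = D ^ 3"
    unfolding l0_def using assms(1) by (simp add: power_mult_distrib power3_eq_cube power2_eq_square)
  have big: "K < t\<^sup>2" if "8 \<le> t" for t
    using assms(7) power_mono[OF that, of 2] by simp
  have "G l0 \<le> 0"
  proof -
    have "A\<^sup>2 \<le> (A * l0 + B * C)\<^sup>2 / (l0\<^sup>2 - K)"
      using assms big[OF \<open>8 \<le> l0\<close>] \<open>8 \<le> l0\<close> by (intro secular_fraction_ge) auto
    moreover have "D\<^sup>2 \<le> A\<^sup>2" "D\<^sup>2 \<le> B\<^sup>2" "(D - 2) * D\<^sup>2 \<le> (D - 2) * E\<^sup>2"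
      using assms by (auto intro!: power_mono mult_left_mono)
    moreover have "D ^ 3 = (D - 2) * D\<^sup>2 + D\<^sup>2 + D\<^sup>2"
      by (simp add: algebra_simps power2_eq_square power3_eq_cube)
    ultimately show ?thesis
      unfolding G_def l0_sq by linarith
  qed
  define l1 where "l1 = l0 + 2 * K + (D - 2) * E\<^sup>2 + B\<^sup>2 + 2 * (A + B * C)\<^sup>2"
  have "0 \<le> (D - 2) * E\<^sup>2"
    using assms(1) by simp
  then have l1: "l0 \<le> l1" "1 \<le> l1" "2 * K \<le> l1" "(D - 2) * E\<^sup>2 + B\<^sup>2 + 2 * (A + B * C)\<^sup>2 \<le> l1"
    unfolding l1_def using assms(6) \<open>8 \<le> l0\<close> zero_le_power2[of B] zero_le_power2[of "A + B * C"]
    by linarith+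
  have "0 \<le> G l1"
  proof -
    have "l1 \<le> l1\<^sup>2"
      using \<open>1 \<le> l1\<close> by (simp add: power2_eq_square)
    then have "(A * l1 + B * C)\<^sup>2 / (l1\<^sup>2 - K) \<le> 2 * (A + B * C)\<^sup>2"
      using assms l1 big[of l1] \<open>8 \<le> l0\<close>
      by (intro secular_fraction_le) auto
    then show ?thesis
      unfolding G_def using \<open>l1 \<le> l1\<^sup>2\<close> l1(4) by linarith
  qed
  have "x\<^sup>2 - K \<noteq> 0" if "x \<in> {l0..l1}" for x
    using big[of x] that \<open>8 \<le> l0\<close> by auto
  then have "continuous_on {l0..l1} G"
    unfolding G_def by (intro continuous_intros) auto
  then obtain t where "l0 \<le> t" "t \<le> l1" "G t = 0"
    using IVT'[of G l0 0 l1] \<open>G l0 \<le> 0\<close> \<open>0 \<le> G l1\<close> \<open>l0 \<le> l1\<close> by auto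
  then show ?thesis
    using that[of t] \<open>8 \<le> l0\<close> unfolding G_def by auto
qed

lemma secular_root_solves_quotient:
  fixes A B C D E F K t :: real
  assumes "0 < t" "K < t\<^sup>2" "K = 2 * F\<^sup>2 + C\<^sup>2"
    and secular: "t\<^sup>2 - (D - 2) * E\<^sup>2 = B\<^sup>2 + (A * t + B * C)\<^sup>2 / (t\<^sup>2 - K)"
  obtains b c where "A * b + B * c + (D - 2) * E\<^sup>2 / t = t"
    and "A + C * c + 2 * F\<^sup>2 * b / t = t * b" and "B + C * b = t * c"
proof
  define b where "b = (A * t + B * C) / (t\<^sup>2 - K)"
  define c where "c = (B + C * b) / t"
  have b: "(t\<^sup>2 - K) * b = A * t + B * C"
    using assms(2) unfolding b_def by simp
  have "t * (A * b + B * c) = B\<^sup>2 + (A * t + B * C) * b"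
    using assms(1) unfolding c_def by (simp add: field_simps power2_eq_square)
  also have "\<dots> = t\<^sup>2 - (D - 2) * E\<^sup>2"
    using secular b by (simp add: b_def power2_eq_square)
  finally show "A * b + B * c + (D - 2) * E\<^sup>2 / t = t"
    using assms(1) by (simp add: field_simps power2_eq_square)
  have "t * (A + C * c + 2 * F\<^sup>2 * b / t) = A * t + B * C + K * b"
    using assms(1,3) unfolding c_def by (simp add: field_simps power2_eq_square)
  also have "\<dots> = t * (t * b)"
    using b by (simp add: algebra_simps power2_eq_square)
  finally show "A + C * c + 2 * F\<^sup>2 * b / t = t * b"
    using assms(1) by simp
  show "B + C * b = t * c"
    using assms(1) unfolding c_def by simp
qed

lemma secular_root_separates:
  fixes A B C E K D W P R t :: real
  assumes "0 < W" "W \<le> A" "0 \<le> E" "E \<le> B" "0 < B" "0 < C" "K < t\<^sup>2" "0 < t" "R < t"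
    and "2 * P\<^sup>2 * t \<le> K * (t - R)" "0 < t * (t - R) - 2 * P\<^sup>2"
    and secular: "t\<^sup>2 - (D - 2) * E\<^sup>2 = B\<^sup>2 + (A * t + B * C)\<^sup>2 / (t\<^sup>2 - K)"
  shows "W\<^sup>2 * (t * (t - R)) < (t * (t - R) - 2 * P\<^sup>2) * (t\<^sup>2 - (D - 1) * E\<^sup>2)"
proof -
  define Q where "Q = t * (t - R) - 2 * P\<^sup>2"
  have "0 < Q" "0 < t\<^sup>2 - K"
    using assms unfolding Q_def by simp_all
  have "W * t < A * t + B * C"
    using assms mult_right_mono[of W A t] by (smt (verit) mult_pos_pos)
  then have "(W * t)\<^sup>2 < (A * t + B * C)\<^sup>2"
    using assms by (intro power_strict_mono) auto
  then have "W\<^sup>2 * t\<^sup>2 / (t\<^sup>2 - K) < (A * t + B * C)\<^sup>2 / (t\<^sup>2 - K)"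
    using \<open>0 < t\<^sup>2 - K\<close> by (simp add: divide_strict_right_mono power_mult_distrib)
  also have "\<dots> \<le> t\<^sup>2 - (D - 1) * E\<^sup>2"
  proof -
    have "E\<^sup>2 \<le> B\<^sup>2"
      using assms(3,4) by (simp add: power_mono)
    moreover have "(D - 1) * E\<^sup>2 = (D - 2) * E\<^sup>2 + E\<^sup>2"
      by (simp add: algebra_simps)
    ultimately show ?thesis
      using secular by linarith
  qed
  finally have "Q * (W\<^sup>2 * t\<^sup>2 / (t\<^sup>2 - K)) < Q * (t\<^sup>2 - (D - 1) * E\<^sup>2)"
    using \<open>0 < Q\<close> by (rule mult_strict_left_mono)
  moreover have "W\<^sup>2 * (t * (t - R)) \<le> Q * (W\<^sup>2 * t\<^sup>2 / (t\<^sup>2 - K))"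
  proof -
    have "t * (2 * P\<^sup>2 * t) \<le> t * (K * (t - R))"
      using assms(10) \<open>0 < t\<close> by (intro mult_left_mono) auto
    then have "t * (t - R) * (t\<^sup>2 - K) \<le> Q * t\<^sup>2"
      by (simp add: Q_def algebra_simps power2_eq_square)
    then have "t * (t - R) \<le> Q * t\<^sup>2 / (t\<^sup>2 - K)"
      using \<open>0 < t\<^sup>2 - K\<close> by (simp add: le_divide_eq)
    then have "W\<^sup>2 * (t * (t - R)) \<le> W\<^sup>2 * (Q * t\<^sup>2 / (t\<^sup>2 - K))"
      by (rule mult_left_mono) simp
    then show ?thesis
      by (simp add: mult_ac)
  qed
  ultimately show ?thesis
    unfolding Q_def by linarith
qed

lemma U4_U5_secular_root:
  fixes p D :: real
  assumes "2 \<le> p" "4 \<le> D"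
  defines "A \<equiv> sombor_weight p D 4" and "B \<equiv> sombor_weight p D 2"
    and "C \<equiv> sombor_weight p 4 2" and "F \<equiv> sombor_weight p 4 1" and "E \<equiv> sombor_weight p D 1"
    and "W \<equiv> sombor_weight p 3 D" and "P \<equiv> sombor_weight p 3 2" and "R \<equiv> sombor_weight p 2 2"
    and "K \<equiv> 2 * (sombor_weight p 4 1)\<^sup>2 + (sombor_weight p 4 2)\<^sup>2"
  obtains t where "0 < t" "K < t\<^sup>2"
    and "t\<^sup>2 - (D - 2) * E\<^sup>2 = B\<^sup>2 + (A * t + B * C)\<^sup>2 / (t\<^sup>2 - K)"
    and "R < t" "0 < t * (t - R) - 2 * P\<^sup>2"
    and "W\<^sup>2 * (t * (t - R)) < (t * (t - R) - 2 * P\<^sup>2) * (t\<^sup>2 - (D - 1) * E\<^sup>2)"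
proof -
  have "0 < p"
    using assms(1) by simp
  have "D \<le> A" "D \<le> B" "D \<le> E" "4 \<le> C" "4 \<le> F" "3 \<le> W" "2 \<le> R"
    unfolding A_def B_def C_def E_def F_def W_def R_def
    using \<open>0 < p\<close> assms(2) by (simp_all add: sombor_weight_ge)
  have "W \<le> A" "E \<le> B"
    unfolding A_def B_def E_def W_def using \<open>0 < p\<close> assms(2)
    by (simp_all add: sombor_weight_commute[of p 3] sombor_weight_mono)
  have "F\<^sup>2 \<le> 17" "C\<^sup>2 \<le> 20" "P\<^sup>2 \<le> 13" "R\<^sup>2 \<le> 8"
    unfolding F_def C_def P_def R_def using assms(1)
      sombor_weight_sq_le[of 4 1 p] sombor_weight_sq_le[of 4 2 p]
      sombor_weight_sq_le[of 3 2 p] sombor_weight_sq_le[of 2 2 p] by simp_all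
  have "48 \<le> K" "K \<le> 54"
    unfolding K_def F_def[symmetric] C_def[symmetric]
    using \<open>F\<^sup>2 \<le> 17\<close> \<open>C\<^sup>2 \<le> 20\<close> power_mono[OF \<open>4 \<le> F\<close>, of 2] power_mono[OF \<open>4 \<le> C\<close>, of 2]
    by simp_all
  have "R < 3"
    using \<open>R\<^sup>2 \<le> 8\<close> power_mono[of 3 R 2] by force
  obtain t where "8 \<le> t"
    and secular: "t\<^sup>2 - (D - 2) * E\<^sup>2 = B\<^sup>2 + (A * t + B * C)\<^sup>2 / (t\<^sup>2 - K)"
    using secular_root_exists[of D A B E C K] \<open>D \<le> A\<close> \<open>D \<le> B\<close> \<open>D \<le> E\<close> \<open>4 \<le> C\<close> \<open>48 \<le> K\<close>
      \<open>K \<le> 54\<close> assms(2) by force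
  have "K < t\<^sup>2"
    using \<open>K \<le> 54\<close> power_mono[OF \<open>8 \<le> t\<close>, of 2] by simp
  have "2 * P\<^sup>2 < t * (t - R)"
    using \<open>P\<^sup>2 \<le> 13\<close> \<open>R < 3\<close> mult_mono[OF \<open>8 \<le> t\<close>, of 5 "t - R"] \<open>8 \<le> t\<close> by simp
  have "2 * P\<^sup>2 * t \<le> K * (t - R)"
  proof -
    have "2 * P\<^sup>2 * t \<le> 26 * t"
      using \<open>P\<^sup>2 \<le> 13\<close> \<open>8 \<le> t\<close> by simp
    also have "\<dots> \<le> 48 * (t - R)"
      using \<open>R < 3\<close> \<open>8 \<le> t\<close> by simp
    also have "\<dots> \<le> K * (t - R)"
      using \<open>48 \<le> K\<close> \<open>R < 3\<close> \<open>8 \<le> t\<close> by (intro mult_right_mono) auto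
    finally show ?thesis .
  qed
  show ?thesis
  proof (rule that)
    show "W\<^sup>2 * (t * (t - R)) < (t * (t - R) - 2 * P\<^sup>2) * (t\<^sup>2 - (D - 1) * E\<^sup>2)"
      using \<open>3 \<le> W\<close> \<open>W \<le> A\<close> \<open>D \<le> E\<close> \<open>E \<le> B\<close> \<open>4 \<le> C\<close> \<open>K < t\<^sup>2\<close>
        \<open>8 \<le> t\<close> \<open>R < 3\<close> \<open>2 * P\<^sup>2 * t \<le> K * (t - R)\<close> \<open>2 * P\<^sup>2 < t * (t - R)\<close> assms(2)
      by (intro secular_root_separates[OF _ _ _ _ _ _ _ _ _ _ _ secular]) auto
  qed (use \<open>8 \<le> t\<close> \<open>K < t\<^sup>2\<close> secular \<open>R < 3\<close> \<open>2 * P\<^sup>2 < t * (t - R)\<close> in auto)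
qed

lemma eigenvalue_U4:
  fixes n :: nat and p t :: real
  defines "D \<equiv> real (n - 3)"
    and "A \<equiv> sombor_weight p (real (n - 3)) 4" and "B \<equiv> sombor_weight p (real (n - 3)) 2"
    and "C \<equiv> sombor_weight p 4 2" and "F \<equiv> sombor_weight p 4 1"
    and "E \<equiv> sombor_weight p (real (n - 3)) 1"
    and "K \<equiv> 2 * (sombor_weight p 4 1)\<^sup>2 + (sombor_weight p 4 2)\<^sup>2"
  assumes n: "7 \<le> n" and t: "0 < t" "K < t\<^sup>2"
    and secular: "t\<^sup>2 - (D - 2) * E\<^sup>2 = B\<^sup>2 + (A * t + B * C)\<^sup>2 / (t\<^sup>2 - K)"
  shows "eigenvalue (sombor_mat p n (U4 n)) t"
proof -
  obtain b c where row0: "A * b + B * c + (D - 2) * E\<^sup>2 / t = t"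
    and row1: "A + C * c + 2 * F\<^sup>2 * b / t = t * b" and row2: "B + C * b = t * c"
    using secular_root_solves_quotient[OF t _ secular] unfolding K_def F_def C_def by blast
  define f :: "nat \<Rightarrow> real" where "f k = (if k = 0 then 1 else if k = 1 then b else if k = 2 then c
    else if k \<le> 4 then F * b / t else E / t)" for k
  have pendants: "(\<Sum>k=5..<n. f k) = (D - 2) * (E / t)"
    using n unfolding D_def f_def by (simp add: of_nat_diff)
  note rows = U4_mult_vec[OF n, where p = p and f = f, folded A_def B_def C_def F_def E_def D_def]
  show ?thesis
  proof (rule eigenvalue_vecI[OF sombor_mat_carrier, of 0 n f])
    fix i assume "i < n"
    consider "i = 0" | "i = 1" | "i = 2" | "i = 3 \<or> i = 4" | "5 \<le> i"
      by linarith
    then show "(sombor_mat p n (U4 n) *\<^sub>v vec n f) $ i = t * f i"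
    proof cases
      case 1
      then show ?thesis
        unfolding 1 rows(1) pendants using row0 by (simp add: f_def power2_eq_square mult_ac)
    next
      case 2
      then show ?thesis
        unfolding 2 rows(2) using row1 by (simp add: f_def power2_eq_square algebra_simps)
    next
      case 3
      then show ?thesis
        unfolding 3 rows(3) using row2 by (simp add: f_def)
    next
      case 4
      then show ?thesis
        using rows(4,5) t(1) by (auto simp: f_def)
    next
      case 5
      then show ?thesis
        unfolding rows(6)[OF 5 \<open>i < n\<close>] using t(1) by (simp add: f_def)
    qed
  qed (use n in \<open>simp_all add: f_def\<close>)
qed

text \<open>The difference of the indicator vectors of two pendant vertices at w lies in the kernel;
  it makes the eigenvalue set nonempty, so that rho is attained.\<close>
lemma eigenvalue_U5_zero:
  fixes p :: real
  assumes "7 \<le> n"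
  shows "eigenvalue (sombor_mat p n (U5 n)) 0"
proof -
  define g :: "nat \<Rightarrow> real" where "g k = (if k = 4 then 1 else if k = 5 then -1 else 0)" for k
  have "{4..<n} = {4, 5} \<union> {6..<n}"
    using assms by auto
  then have "(\<Sum>k=4..<n. g k) = 0"
    by (simp add: sum.union_disjoint g_def)
  have "(sombor_mat p n (U5 n) *\<^sub>v vec n g) $ i = 0" if "i < n" for i
  proof -
    consider "i = 0" | "i = 1" | "i = 2" | "i = 3" | "4 \<le> i"
      by linarith
    then show ?thesis
      using U5_mult_vec[OF assms, where p = p and f = g] \<open>(\<Sum>k=4..<n. g k) = 0\<close> that
      by cases (simp_all add: g_def)
  qed
  then show ?thesis
    using assms by (intro eigenvalue_vecI[OF sombor_mat_carrier, of 4 n g]) (simp_all add: g_def)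
qed

lemma eigenvalue_U5_lt:
  fixes n :: nat and p t k :: real
  defines "D \<equiv> real (n - 3)"
    and "P \<equiv> sombor_weight p 3 2" and "R \<equiv> sombor_weight p 2 2"
    and "W \<equiv> sombor_weight p 3 (real (n - 3))" and "E \<equiv> sombor_weight p (real (n - 3)) 1"
  assumes n: "7 \<le> n" and "0 < p"
    and separation: "R < t" "0 < t * (t - R) - 2 * P\<^sup>2"
      "W\<^sup>2 * (t * (t - R)) < (t * (t - R) - 2 * P\<^sup>2) * (t\<^sup>2 - (D - 1) * E\<^sup>2)"
    and eigenvalue: "eigenvalue (sombor_mat p n (U5 n)) k"
  shows "k < t"
proof -
  have "4 \<le> D"
    unfolding D_def using n by simp
  then have "3 \<le> W" "3 \<le> P" "D \<le> E" "0 \<le> R"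
    unfolding W_def P_def E_def R_def D_def[symmetric] using \<open>0 < p\<close>
    by (simp_all add: sombor_weight_ge sombor_weight_nonneg)
  then have "0 < W" "0 < P" "0 < E" "0 < D - 1"
    using \<open>4 \<le> D\<close> by simp_all
  then obtain a b e where "0 < a" "0 < b" "0 < e"
    and ineqs: "2 * P * b + W < t * a" "P * a + R * b < t * b"
      "W * a + (D - 1) * E * e < t" "E < t * e"
    using U5_quotient_subinvariant[OF _ _ _ _ \<open>0 \<le> R\<close> separation] by blast
  define f :: "nat \<Rightarrow> real"
    where "f i = (if i = 0 then a else if i \<le> 2 then b else if i = 3 then 1 else e)" for i
  have pendants: "(\<Sum>i=4..<n. f i) = (D - 1) * e"
    using n unfolding D_def f_def by (simp add: of_nat_diff)
  note rows = U5_mult_vec[OF n, where p = p and f = f, folded P_def R_def W_def E_def D_def]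
  have "\<bar>k\<bar> < t"
  proof (rule abs_eigenvalue_lt_subinvariant[OF sombor_mat_carrier sombor_mat_nonneg _ _ eigenvalue])
    show "0 < f i" for i
      using \<open>0 < a\<close> \<open>0 < b\<close> \<open>0 < e\<close> by (simp add: f_def)
    fix i assume "i < n"
    consider "i = 0" | "i = 1" | "i = 2" | "i = 3" | "4 \<le> i"
      by linarith
    then show "(sombor_mat p n (U5 n) *\<^sub>v vec n f) $ i < t * f i"
    proof cases
      case 1
      then show ?thesis
        unfolding 1 rows(1) using ineqs(1) by (simp add: f_def)
    next
      case 2
      then show ?thesis
        unfolding 2 rows(2) using ineqs(2) by (simp add: f_def)
    next
      case 3
      then show ?thesis
        unfolding 3 rows(3) using ineqs(2) by (simp add: f_def)
    next
      case 4
      then show ?thesis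
        unfolding 4 rows(4) pendants using ineqs(3) by (simp add: f_def mult_ac)
    next
      case 5
      then show ?thesis
        unfolding rows(5)[OF 5 \<open>i < n\<close>] using 5 ineqs(4) by (simp add: f_def)
    qed
  qed
  then show ?thesis
    by simp
qed

theorem lemma4p1:
  fixes n :: nat and p :: real
  assumes "n \<ge> 7" and "p \<ge> 2"
  shows "rho (sombor_mat p n (U5 n)) < rho (sombor_mat p n (U4 n))"
proof -
  have "4 \<le> real (n - 3)" "0 < p"
    using assms by simp_all
  then obtain t where "eigenvalue (sombor_mat p n (U4 n)) t"
    and "\<And>k. eigenvalue (sombor_mat p n (U5 n)) k \<Longrightarrow> k < t"
    using U4_U5_secular_root[OF assms(2)] eigenvalue_U4[OF assms(1)] eigenvalue_U5_lt[OF assms(1)]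
    by metis
  then have "rho (sombor_mat p n (U5 n)) < t" "t \<le> rho (sombor_mat p n (U4 n))"
    using assms(1) by (auto intro: rho_lt eigenvalue_le_rho sombor_mat_carrier eigenvalue_U5_zero)
  then show ?thesis
    by simp
qed

end
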